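(* Let $\omega$ be an inner function with $\omega(0)=0$, let $F=\ell\circ\omega$, and let $\varphi$ be an analytic self-map of $\mathbb{D}$. Then $T_{F,\varphi}(f)\in\mathcal{P}$ for every $f\in\mathcal{P}$ if and only if $\varphi\equiv 0$.
   Context: $\mathbb{D}$ is the open unit disk. $\mathcal{P}$ is the set of analytic $f$ on $\mathbb{D}$ with $\mathrm{Re}\,f>0$ and $f(0)=1$. $\ell(z)=\frac{1+z}{1-z}$. An inner function is an analytic $\omega$ on $\mathbb{D}$ with $|\omega|\le 1$ and radial limits of modulus $1$ almost everywhere on the unit circle. $T_{F,\varphi}(f)=F\cdot(f\circ\varphi)$. *)

theory Defs
  imports "HOL-Analysis.Analysis"
begin

definition unit_disc :: "complex set" where
  "unit_disc = ball 0 1"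

definition caratheodory_class :: "(complex \<Rightarrow> complex) set" where
  "caratheodory_class = {f. f analytic_on unit_disc \<and> (\<forall>z\<in>unit_disc. Re (f z) > 0) \<and> f 0 = 1}"

definition ell :: "complex \<Rightarrow> complex" where
  "ell z = (1 + z) / (1 - z)"

definition inner_function :: "(complex \<Rightarrow> complex) \<Rightarrow> bool" where
  "inner_function w \<longleftrightarrow> w analytic_on unit_disc \<and> (\<forall>z\<in>unit_disc. cmod (w z) \<le> 1) \<and>
     {\<theta> \<in> {0..2*pi}. \<not> (\<exists>L. cmod L = 1 \<and>
          ((\<lambda>r::real. w (complex_of_real r * cis \<theta>)) \<longlongrightarrow> L) (at_left 1))} \<in> null_sets lborel"

definition weighted_comp :: "(complex \<Rightarrow> complex) \<Rightarrow> (complex \<Rightarrow> complex) \<Rightarrow> (complex \<Rightarrow> complex) \<Rightarrow> (complex \<Rightarrow> complex)" where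
  "weighted_comp F \<phi> f = (\<lambda>z. F z * f (\<phi> z))"

end

theory Submission
  imports Defs "HOL-Complex_Analysis.Complex_Analysis"
begin

text \<open>If \<open>T\<^sub>F\<^sub>,\<^sub>\<phi>\<close> preserves \<open>\<P>\<close>, test it on the rotated Cayley maps \<open>\<ell>(c z)\<close>, \<open>|c| \<le> 1\<close>:
  positivity of \<open>Re (\<ell>(\<omega> z) \<ell>(c \<phi> z))\<close> for the best rotation \<open>c\<close> yields
  \<open>|\<phi> z (1 - \<omega> z\<^sup>2)| \<le> 3/2 (1 - |\<omega> z|\<^sup>2)\<close>. The holomorphic function \<open>K = \<phi> (1 - \<omega>\<^sup>2)\<close> then has
  Taylor coefficients bounded, via Cauchy's estimate, by the circle means of \<open>1 - |\<omega>|\<^sup>2\<close>, and these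
  tend to \<open>0\<close> by bounded convergence because \<open>\<omega>\<close> has unimodular radial limits almost everywhere.
  So \<open>K = 0\<close>, and \<open>\<phi> = 0\<close> since \<open>|\<omega>| < 1\<close> inside the disc. Conversely, for \<open>\<phi> = 0\<close> the
  operator sends every \<open>f\<close> to \<open>\<ell> \<circ> \<omega>\<close>.\<close>

lemma open_unit_disc: "open unit_disc"
  by (simp add: unit_disc_def)

lemma connected_unit_disc: "connected unit_disc"
  by (simp add: unit_disc_def)

lemma zero_in_unit_disc: "0 \<in> unit_disc"
  by (simp add: unit_disc_def)

lemma analytic_on_unit_disc_iff: "f analytic_on unit_disc \<longleftrightarrow> f holomorphic_on unit_disc"
  by (simp add: analytic_on_open open_unit_disc)

lemma cball_subset_unit_disc: "r < 1 \<Longrightarrow> cball 0 r \<subseteq> unit_disc"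
  by (auto simp: unit_disc_def)

lemma norm_circlepath_0: "0 \<le> r \<Longrightarrow> cmod (circlepath 0 r t) = r"
  by (simp add: circlepath norm_mult)

lemma circlepath_0_eq_cis: "circlepath 0 r t = of_real r * cis (2 * pi * t)"
  by (simp add: circlepath cis_conv_exp mult_ac)

lemma continuous_on_comp_circlepath_0:
  assumes "continuous_on (cball 0 r) K" "0 \<le> r"
  shows "continuous_on {0..1} (\<lambda>t. K (circlepath 0 r t))"
  by (rule continuous_on_compose2[OF assms(1) path_circlepath[unfolded path_def]])
     (use assms(2) in \<open>auto simp: norm_circlepath_0\<close>)

lemma inner_function_holomorphic: "inner_function \<omega> \<Longrightarrow> \<omega> holomorphic_on unit_disc"
  by (simp add: inner_function_def analytic_on_unit_disc_iff)

subsection \<open>The Cayley map\<close>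

lemma ell_0 [simp]: "ell 0 = 1"
  by (simp add: ell_def)

lemma Re_ell_mult_ell:
  assumes "a \<noteq> 1" "b \<noteq> 1"
  shows "Re (ell a * ell b) =
    ((1 - (cmod a)\<^sup>2) * (1 - (cmod b)\<^sup>2) - 4 * Im a * Im b) / ((cmod (1 - a))\<^sup>2 * (cmod (1 - b))\<^sup>2)"
proof -
  have "ell a * ell b = ((1 + a) * cnj (1 - a)) * ((1 + b) * cnj (1 - b))
      / of_real ((cmod (1 - a))\<^sup>2 * (cmod (1 - b))\<^sup>2)"
    using assms unfolding ell_def by (simp add: complex_div_cnj[of "1 + a"] complex_div_cnj[of "1 + b"])
  also have "Re \<dots> = Re (((1 + a) * cnj (1 - a)) * ((1 + b) * cnj (1 - b)))
      / ((cmod (1 - a))\<^sup>2 * (cmod (1 - b))\<^sup>2)"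
    by simp
  also have "Re (((1 + a) * cnj (1 - a)) * ((1 + b) * cnj (1 - b)))
      = (1 - (cmod a)\<^sup>2) * (1 - (cmod b)\<^sup>2) - 4 * Im a * Im b"
    unfolding cmod_power2 by (simp add: algebra_simps power2_eq_square)
  finally show ?thesis .
qed

lemma Re_ell: "a \<noteq> 1 \<Longrightarrow> Re (ell a) = (1 - (cmod a)\<^sup>2) / (cmod (1 - a))\<^sup>2"
  using Re_ell_mult_ell[of a 0] by simp

lemma Re_ell_pos:
  assumes "cmod a < 1"
  shows "Re (ell a) > 0"
proof -
  have "a \<noteq> 1" "(cmod a)\<^sup>2 < 1"
    using assms by (auto simp: abs_square_less_1)
  then show ?thesis
    by (simp add: Re_ell)
qed

lemma ell_comp_in_caratheodory_class:
  assumes "g holomorphic_on unit_disc" "\<And>z. z \<in> unit_disc \<Longrightarrow> cmod (g z) < 1" "g 0 = 0"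
  shows "(\<lambda>z. ell (g z)) \<in> caratheodory_class"
proof -
  have "(\<lambda>z. (1 + g z) / (1 - g z)) holomorphic_on unit_disc"
    using assms by (intro holomorphic_intros) (auto dest: assms(2))
  then show ?thesis
    using assms Re_ell_pos by (simp add: caratheodory_class_def analytic_on_unit_disc_iff ell_def)
qed

lemma inner_function_norm_less_1:
  assumes "inner_function \<omega>" "\<omega> 0 = 0" "z \<in> unit_disc"
  shows "cmod (\<omega> z) < 1"
proof (rule ccontr)
  assume "\<not> cmod (\<omega> z) < 1"
  then have max: "cmod (\<omega> z) = 1"
    using assms unfolding inner_function_def by force
  have "\<omega> constant_on unit_disc"
    using assms max open_unit_disc connected_unit_disc inner_function_holomorphic[OF assms(1)]
    by (intro maximum_modulus_principle[where U = unit_disc and \<xi> = z]) (auto simp: inner_function_def)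
  then have "\<omega> z = \<omega> 0"
    using assms(3) zero_in_unit_disc by (auto simp: constant_on_def)
  with max assms(2) show False
    by simp
qed

subsection \<open>A pointwise consequence of preserving the Carath\'eodory class\<close>

lemma Im_mult_less_of_Re_ell_mult_pos:
  assumes "cmod a < 1" "Re (ell a * ell (\<i> * of_real y)) > 0"
  shows "4 * Im a * y < (1 - (cmod a)\<^sup>2) * (1 - y\<^sup>2)"
proof -
  have a: "a \<noteq> 1"
    using assms(1) by auto
  have iy: "\<i> * of_real y \<noteq> 1"
    by (simp add: complex_eq_iff)
  have "0 < ((1 - (cmod a)\<^sup>2) * (1 - y\<^sup>2) - 4 * Im a * y)
      / ((cmod (1 - a))\<^sup>2 * (cmod (1 - \<i> * of_real y))\<^sup>2)"
    using assms(2) unfolding Re_ell_mult_ell[OF a iy] by (simp add: norm_mult)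
  moreover have "(cmod (1 - a))\<^sup>2 * (cmod (1 - \<i> * of_real y))\<^sup>2 > 0"
    using a iy by simp
  ultimately show ?thesis
    by (simp add: zero_less_divide_iff)
qed

lemma norm_one_minus_square_le:
  assumes "cmod a \<le> 1"
  shows "cmod (1 - a\<^sup>2) \<le> 2 * \<bar>Im a\<bar> + (1 - (cmod a)\<^sup>2)"
proof -
  have "a * cnj a = of_real ((cmod a)\<^sup>2)"
    by (simp add: complex_norm_square del: of_real_power)
  then have split: "1 - a\<^sup>2 = a * (cnj a - a) + of_real (1 - (cmod a)\<^sup>2)"
    by (simp add: algebra_simps power2_eq_square)
  have "cnj a - a = - (2 * \<i> * of_real (Im a))"
    by (simp add: complex_eq_iff)
  then have "cmod (a * (cnj a - a)) = cmod a * (2 * \<bar>Im a\<bar>)"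
    by (simp add: norm_mult)
  also have "\<dots> \<le> 2 * \<bar>Im a\<bar>"
    using assms by (simp add: mult_left_le_one_le)
  finally have "cmod (a * (cnj a - a)) \<le> 2 * \<bar>Im a\<bar>" .
  moreover have "cmod (of_real (1 - (cmod a)\<^sup>2) :: complex) = 1 - (cmod a)\<^sup>2"
  proof -
    have "0 \<le> 1 - (cmod a)\<^sup>2"
      using assms by (simp add: power_le_one)
    then show ?thesis
      by (simp only: norm_of_real abs_of_nonneg)
  qed
  moreover have "cmod (1 - a\<^sup>2) \<le> cmod (a * (cnj a - a)) + cmod (of_real (1 - (cmod a)\<^sup>2) :: complex)"
    unfolding split by (rule norm_triangle_ineq)
  ultimately show ?thesis
    by linarith
qed

lemma norm_mult_one_minus_square_le:
  assumes "cmod a < 1" "cmod b < 1" "4 * (\<bar>Im a\<bar> * cmod b) < (1 - (cmod a)\<^sup>2) * (1 - (cmod b)\<^sup>2)"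
  shows "cmod (b * (1 - a\<^sup>2)) \<le> 3/2 * (1 - (cmod a)\<^sup>2)"
proof -
  have defect: "0 < 1 - (cmod a)\<^sup>2" "0 \<le> 1 - (cmod b)\<^sup>2" "1 - (cmod b)\<^sup>2 \<le> 1"
    using assms(1,2) by (auto simp: abs_square_less_1 power_le_one)
  then have "(1 - (cmod a)\<^sup>2) * (1 - (cmod b)\<^sup>2) \<le> 1 - (cmod a)\<^sup>2"
    by (simp add: mult_left_le)
  then have Im_bound: "4 * (\<bar>Im a\<bar> * cmod b) \<le> 1 - (cmod a)\<^sup>2"
    using assms(3) by linarith
  have "cmod (b * (1 - a\<^sup>2)) \<le> cmod b * (2 * \<bar>Im a\<bar> + (1 - (cmod a)\<^sup>2))"
    unfolding norm_mult using assms(1) by (intro mult_left_mono norm_one_minus_square_le) auto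
  also have "\<dots> = 2 * (\<bar>Im a\<bar> * cmod b) + cmod b * (1 - (cmod a)\<^sup>2)"
    by (simp add: algebra_simps)
  also have "\<dots> \<le> 2 * (\<bar>Im a\<bar> * cmod b) + (1 - (cmod a)\<^sup>2)"
    using assms(2) defect(1) by (simp add: mult_left_le_one_le)
  finally show ?thesis
    using Im_bound by argo
qed

lemma caratheodory_preserving_pointwise_bound:
  assumes H: "\<forall>f\<in>caratheodory_class. weighted_comp (ell \<circ> \<omega>) \<phi> f \<in> caratheodory_class"
    and z: "z \<in> unit_disc" and a: "cmod (\<omega> z) < 1" and b: "cmod (\<phi> z) < 1"
  shows "cmod (\<phi> z * (1 - (\<omega> z)\<^sup>2)) \<le> 3/2 * (1 - (cmod (\<omega> z))\<^sup>2)"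
proof -
  txt \<open>Rotate \<open>\<phi> z\<close> onto the imaginary axis on the side of \<open>\<omega> z\<close>, where the cross term
    \<open>Im (\<omega> z) Im (c \<phi> z)\<close> of \<open>Re (\<ell>(\<omega> z) \<ell>(c \<phi> z))\<close> is largest. If \<open>\<phi> z = 0\<close>, then
    \<open>c = 0\<close> by the convention \<open>x / 0 = 0\<close>, which is still a valid choice.\<close>
  define s :: real where "s = (if Im (\<omega> z) \<ge> 0 then 1 else -1)"
  define y where "y = s * cmod (\<phi> z)"
  define c where "c = \<i> * of_real y / \<phi> z"
  have cb: "c * \<phi> z = \<i> * of_real y"
    by (cases "\<phi> z = 0") (auto simp: c_def y_def)
  have c: "cmod c \<le> 1"
    by (cases "\<phi> z = 0") (auto simp: c_def y_def s_def norm_mult norm_divide)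
  have "cmod (c * w) < 1" if "w \<in> unit_disc" for w
    using c that mult_le_less_imp_less[of "cmod c" 1 "cmod w" 1]
    by (cases "c = 0") (auto simp: unit_disc_def norm_mult)
  then have "(\<lambda>w. ell (c * w)) \<in> caratheodory_class"
    by (intro ell_comp_in_caratheodory_class holomorphic_intros) auto
  with H z have "Re (ell (\<omega> z) * ell (c * \<phi> z)) > 0"
    by (force simp: caratheodory_class_def weighted_comp_def)
  then have "4 * Im (\<omega> z) * y < (1 - (cmod (\<omega> z))\<^sup>2) * (1 - y\<^sup>2)"
    unfolding cb using a by (rule Im_mult_less_of_Re_ell_mult_pos[rotated])
  moreover have "Im (\<omega> z) * y = \<bar>Im (\<omega> z)\<bar> * cmod (\<phi> z)" "y\<^sup>2 = (cmod (\<phi> z))\<^sup>2"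
    by (auto simp: y_def s_def power_mult_distrib)
  ultimately show ?thesis
    using a b by (intro norm_mult_one_minus_square_le) (auto simp: mult.assoc)
qed

subsection \<open>Cauchy's estimate in integral form\<close>

lemma higher_deriv_le_circle_integral:
  assumes contK: "continuous_on (cball 0 r) K" and holK: "K holomorphic_on ball 0 r" and r: "0 < r"
  shows "cmod ((deriv ^^ n) K 0) / fact n * r ^ n \<le> integral {0..1} (\<lambda>t. cmod (K (circlepath 0 r t)))"
proof -
  define g where "g t = K (circlepath 0 r t) / (circlepath 0 r t) ^ Suc n
      * vector_derivative (circlepath 0 r) (at t within {0..1})" for t
  have "((\<lambda>u. K u / (u - 0) ^ Suc n) has_contour_integral (2 * pi * \<i> / fact n * (deriv ^^ n) K 0))
      (circlepath 0 r)"
    using contK holK r by (intro Cauchy_has_contour_integral_higher_derivative_circlepath) auto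
  then have I: "(g has_integral (2 * pi * \<i> / fact n * (deriv ^^ n) K 0)) {0..1}"
    by (simp add: has_contour_integral_def g_def[abs_def])
  have norm_g: "norm (g t) = 2 * pi / r ^ n * cmod (K (circlepath 0 r t))" if "t \<in> {0..1}" for t
    using that r
    by (simp add: g_def vector_derivative_circlepath01 norm_circlepath_0 norm_mult norm_divide norm_power
        field_simps)
  have "(\<lambda>t. 2 * pi / r ^ n * cmod (K (circlepath 0 r t))) integrable_on {0..1}"
    using continuous_on_comp_circlepath_0[OF contK] r
    by (intro integrable_continuous_interval continuous_intros) auto
  then have "norm (integral {0..1} g) \<le> integral {0..1} (\<lambda>t. 2 * pi / r ^ n * cmod (K (circlepath 0 r t)))"
    using I norm_g by (intro integral_norm_bound_integral) auto
  then have "2 * pi / fact n * cmod ((deriv ^^ n) K 0)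
      \<le> 2 * pi / r ^ n * integral {0..1} (\<lambda>t. cmod (K (circlepath 0 r t)))"
    unfolding integral_unique[OF I] integral_mult_right by (simp add: norm_mult norm_divide)
  then show ?thesis
    using r by (simp add: field_simps)
qed

definition radii :: "nat \<Rightarrow> real" where
  "radii j = 1 - inverse (real (Suc j)) / 2"

lemma radii_pos: "0 < radii j"
  by (simp add: radii_def field_simps)

lemma radii_less_1: "radii j < 1"
  by (simp add: radii_def)

lemma radii_tendsto_1: "radii \<longlonglongrightarrow> 1"
proof -
  have "(\<lambda>j. 1 - inverse (real (Suc j)) / 2) \<longlonglongrightarrow> 1 - 0 / 2"
    by (intro tendsto_intros LIMSEQ_inverse_real_of_nat) simp
  then show ?thesis
    by (simp add: radii_def[abs_def])
qed

lemma filterlim_radii_at_left_1: "filterlim radii (at_left 1) sequentially"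
  using radii_less_1 by (simp add: filterlim_at radii_tendsto_1 less_imp_neq)

subsection \<open>Boundary behaviour of inner functions\<close>

lemma bounded_ae_convergence_integral_tendsto_0:
  fixes f :: "nat \<Rightarrow> real \<Rightarrow> real"
  assumes f: "\<And>j. f j integrable_on {a..b}" and bound: "\<And>j t. t \<in> {a..b} \<Longrightarrow> \<bar>f j t\<bar> \<le> B"
    and N: "negligible N" and conv: "\<And>t. t \<in> {a..b} - N \<Longrightarrow> (\<lambda>j. f j t) \<longlonglongrightarrow> 0"
  shows "(\<lambda>j. integral {a..b} (f j)) \<longlonglongrightarrow> 0"
proof -
  have "(\<lambda>j. integral ({a..b} - N) (f j)) \<longlonglongrightarrow> integral ({a..b} - N) (\<lambda>_. 0)"
  proof (rule dominated_convergence(2))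
    show "f j integrable_on {a..b} - N" for j
      using f by (rule integrable_spike_set) (auto intro!: negligible_subset[OF N])
    show "(\<lambda>_. B) integrable_on {a..b} - N"
      by (rule integrable_spike_set[OF integrable_const_ivl]) (auto intro!: negligible_subset[OF N])
  qed (use bound conv in auto)
  moreover have "integral ({a..b} - N) (f j) = integral {a..b} (f j)" for j
    by (rule integral_spike_set) (auto intro!: negligible_subset[OF N])
  ultimately show ?thesis
    by simp
qed

lemma inner_function_negligible_nonradial_angles:
  assumes "inner_function \<omega>"
  shows "negligible {t \<in> {0..1}. \<not> (\<exists>L. cmod L = 1 \<and>
           ((\<lambda>r::real. \<omega> (of_real r * cis (2 * pi * t))) \<longlongrightarrow> L) (at_left 1))}"
    (is "negligible ?T")
proof -
  define \<Theta> where "\<Theta> = {\<theta> \<in> {0..2*pi}. \<not> (\<exists>L. cmod L = 1 \<and>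
           ((\<lambda>r::real. \<omega> (of_real r * cis \<theta>)) \<longlongrightarrow> L) (at_left 1))}"
  have "negligible \<Theta>"
    using assms by (simp add: inner_function_def \<Theta>_def negligible_iff_null_sets null_sets_completionI)
  then have "negligible ((\<lambda>\<theta>. \<theta> / (2 * pi)) ` \<Theta>)"
    by (rule negligible_differentiable_image_negligible[rotated])
       (auto simp: differentiable_on_def differentiable_def intro!: derivative_eq_intros)
  moreover have "t \<in> (\<lambda>\<theta>. \<theta> / (2 * pi)) ` \<Theta>" if "t \<in> ?T" for t
    using that by (intro image_eqI[where x = "2 * pi * t"]) (auto simp: \<Theta>_def)
  then have "?T \<subseteq> (\<lambda>\<theta>. \<theta> / (2 * pi)) ` \<Theta>"
    by blast
  ultimately show ?thesis
    using negligible_subset by blast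
qed

lemma inner_function_circle_mean_defect_tendsto_0:
  assumes inner: "inner_function \<omega>"
  shows "(\<lambda>j. integral {0..1} (\<lambda>t. 1 - (cmod (\<omega> (circlepath 0 (radii j) t)))\<^sup>2)) \<longlonglongrightarrow> 0"
proof (rule bounded_ae_convergence_integral_tendsto_0[OF _ _ inner_function_negligible_nonradial_angles[OF inner]])
  have "continuous_on unit_disc \<omega>"
    using inner_function_holomorphic[OF inner] by (rule holomorphic_on_imp_continuous_on)
  then have "continuous_on (cball 0 (radii j)) \<omega>" for j
    by (rule continuous_on_subset) (simp add: cball_subset_unit_disc radii_less_1)
  then have "continuous_on {0..1} (\<lambda>t. \<omega> (circlepath 0 (radii j) t))" for j
    using radii_pos[of j] by (intro continuous_on_comp_circlepath_0) auto
  then show "(\<lambda>t. 1 - (cmod (\<omega> (circlepath 0 (radii j) t)))\<^sup>2) integrable_on {0..1}" for j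
    by (intro integrable_continuous_interval continuous_intros)
  have "cmod (\<omega> (circlepath 0 (radii j) t)) \<le> 1" for j t
    using inner radii_pos[of j] radii_less_1[of j]
    by (simp add: inner_function_def unit_disc_def norm_circlepath_0)
  then show "\<bar>1 - (cmod (\<omega> (circlepath 0 (radii j) t)))\<^sup>2\<bar> \<le> 1" for j t
    by (simp add: abs_square_le_1 power_le_one)
next
  fix t
  assume "t \<in> {0..1} - {t \<in> {0..1}. \<not> (\<exists>L. cmod L = 1 \<and>
           ((\<lambda>r::real. \<omega> (of_real r * cis (2 * pi * t))) \<longlongrightarrow> L) (at_left 1))}"
  then obtain L where L: "cmod L = 1" "((\<lambda>r::real. \<omega> (of_real r * cis (2 * pi * t))) \<longlongrightarrow> L) (at_left 1)"
    by blast
  have "(\<lambda>j. \<omega> (of_real (radii j) * cis (2 * pi * t))) \<longlonglongrightarrow> L"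
    using filterlim_compose[OF L(2) filterlim_radii_at_left_1] by (simp add: o_def)
  then have "(\<lambda>j. 1 - (cmod (\<omega> (circlepath 0 (radii j) t)))\<^sup>2) \<longlonglongrightarrow> 1 - (cmod L)\<^sup>2"
    unfolding circlepath_0_eq_cis by (intro tendsto_intros)
  with L(1) show "(\<lambda>j. 1 - (cmod (\<omega> (circlepath 0 (radii j) t)))\<^sup>2) \<longlonglongrightarrow> 0"
    by simp
qed

lemma holomorphic_eq_0_if_dominated_by_inner_defect:
  assumes inner: "inner_function \<omega>" and holK: "K holomorphic_on unit_disc"
    and dom: "\<And>z. z \<in> unit_disc \<Longrightarrow> cmod (K z) \<le> C * (1 - (cmod (\<omega> z))\<^sup>2)"
    and z: "z \<in> unit_disc"
  shows "K z = 0"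
proof (rule holomorphic_fun_eq_0_on_connected[OF holK open_unit_disc connected_unit_disc _ zero_in_unit_disc z])
  fix n
  define D where "D = cmod ((deriv ^^ n) K 0) / fact n"
  have contK: "continuous_on (cball 0 (radii j)) K" for j
    using holK radii_less_1[of j]
    by (meson cball_subset_unit_disc continuous_on_subset holomorphic_on_imp_continuous_on)
  have cont_\<omega>: "continuous_on (cball 0 (radii j)) \<omega>" for j
    using inner_function_holomorphic[OF inner] radii_less_1[of j]
    by (meson cball_subset_unit_disc continuous_on_subset holomorphic_on_imp_continuous_on)
  have "D * radii j ^ n \<le> C * integral {0..1} (\<lambda>t. 1 - (cmod (\<omega> (circlepath 0 (radii j) t)))\<^sup>2)" for j
  proof -
    have "D * radii j ^ n \<le> integral {0..1} (\<lambda>t. cmod (K (circlepath 0 (radii j) t)))"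
      unfolding D_def
    proof (rule higher_deriv_le_circle_integral[OF contK _ radii_pos])
      show "K holomorphic_on ball 0 (radii j)"
        by (rule holomorphic_on_subset[OF holK]) (use radii_less_1[of j] in \<open>auto simp: unit_disc_def\<close>)
    qed
    also have "\<dots> \<le> integral {0..1} (\<lambda>t. C * (1 - (cmod (\<omega> (circlepath 0 (radii j) t)))\<^sup>2))"
      using continuous_on_comp_circlepath_0[OF contK] continuous_on_comp_circlepath_0[OF cont_\<omega>]
        radii_pos[of j] radii_less_1[of j]
      by (intro integral_le integrable_continuous_interval continuous_intros dom)
         (auto simp: unit_disc_def norm_circlepath_0 less_imp_le)
    finally show ?thesis
      by simp
  qed
  moreover have "(\<lambda>j. D * radii j ^ n) \<longlonglongrightarrow> D * 1 ^ n"
    by (intro tendsto_intros radii_tendsto_1)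
  moreover have "(\<lambda>j. C * integral {0..1} (\<lambda>t. 1 - (cmod (\<omega> (circlepath 0 (radii j) t)))\<^sup>2)) \<longlonglongrightarrow> C * 0"
    by (intro tendsto_intros inner_function_circle_mean_defect_tendsto_0 inner)
  ultimately have "D \<le> 0"
    using LIMSEQ_le by fastforce
  moreover have "(0::real) < fact n"
    by simp
  ultimately show "(deriv ^^ n) K 0 = 0"
    by (simp add: D_def divide_le_0_iff)
qed

lemma caratheodory_class_cong:
  assumes "f \<in> caratheodory_class" "\<And>z. z \<in> unit_disc \<Longrightarrow> g z = f z"
  shows "g \<in> caratheodory_class"
proof -
  have "g holomorphic_on unit_disc"
    using assms by (auto simp: caratheodory_class_def analytic_on_unit_disc_iff elim!: holomorphic_transform)
  then show ?thesis
    using assms by (simp add: caratheodory_class_def analytic_on_unit_disc_iff zero_in_unit_disc)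
qed

lemma caratheodory_preserving_imp_vanishing:
  assumes H: "\<forall>f\<in>caratheodory_class. weighted_comp (ell \<circ> \<omega>) \<phi> f \<in> caratheodory_class"
    and inner: "inner_function \<omega>" and \<omega>_lt: "\<And>z. z \<in> unit_disc \<Longrightarrow> cmod (\<omega> z) < 1"
    and hol_\<phi>: "\<phi> holomorphic_on unit_disc" and \<phi>_lt: "\<And>z. z \<in> unit_disc \<Longrightarrow> cmod (\<phi> z) < 1"
    and z: "z \<in> unit_disc"
  shows "\<phi> z = 0"
proof -
  have "(\<lambda>z. \<phi> z * (1 - (\<omega> z)\<^sup>2)) holomorphic_on unit_disc"
    using hol_\<phi> inner_function_holomorphic[OF inner] by (intro holomorphic_intros)
  moreover have "cmod (\<phi> w * (1 - (\<omega> w)\<^sup>2)) \<le> 3/2 * (1 - (cmod (\<omega> w))\<^sup>2)" if "w \<in> unit_disc" for w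
    using caratheodory_preserving_pointwise_bound[OF H that \<omega>_lt[OF that] \<phi>_lt[OF that]] .
  ultimately have "\<phi> z * (1 - (\<omega> z)\<^sup>2) = 0"
    using holomorphic_eq_0_if_dominated_by_inner_defect[OF inner] z by blast
  moreover have "cmod ((\<omega> z)\<^sup>2) < 1"
    using \<omega>_lt[OF z] by (simp add: norm_power power_less_one_iff)
  then have "(\<omega> z)\<^sup>2 \<noteq> 1"
    by auto
  ultimately show ?thesis
    by simp
qed

theorem proposition3p2:
  fixes \<omega> \<phi> :: "complex \<Rightarrow> complex"
  assumes "inner_function \<omega>" and "\<omega> 0 = 0"
    and "\<phi> analytic_on unit_disc" and "\<phi> ` unit_disc \<subseteq> unit_disc"
  shows "(\<forall>f\<in>caratheodory_class. weighted_comp (ell \<circ> \<omega>) \<phi> f \<in> caratheodory_class)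
         \<longleftrightarrow> (\<forall>z\<in>unit_disc. \<phi> z = 0)"
proof
  have \<omega>_lt: "cmod (\<omega> z) < 1" if "z \<in> unit_disc" for z
    using inner_function_norm_less_1[OF assms(1,2) that] .
  have \<phi>_lt: "cmod (\<phi> z) < 1" if "z \<in> unit_disc" for z
    using assms(4) that by (auto simp: unit_disc_def subset_iff)
  show "\<forall>z\<in>unit_disc. \<phi> z = 0"
    if "\<forall>f\<in>caratheodory_class. weighted_comp (ell \<circ> \<omega>) \<phi> f \<in> caratheodory_class"
    using caratheodory_preserving_imp_vanishing[OF that assms(1) \<omega>_lt _ \<phi>_lt] assms(3)
    by (simp add: analytic_on_unit_disc_iff)
  have ell_\<omega>: "(\<lambda>z. ell (\<omega> z)) \<in> caratheodory_class"
    using inner_function_holomorphic[OF assms(1)] \<omega>_lt assms(2) by (rule ell_comp_in_caratheodory_class)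
  show "\<forall>f\<in>caratheodory_class. weighted_comp (ell \<circ> \<omega>) \<phi> f \<in> caratheodory_class"
    if "\<forall>z\<in>unit_disc. \<phi> z = 0"
    using that by (intro ballI caratheodory_class_cong[OF ell_\<omega>])
      (simp add: weighted_comp_def caratheodory_class_def)
qed

end
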